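(* For integers $1\le k\le l$, up to a unit of $\mathbb{Z}[q,q^{-1}]$, $$\frac{g_{l,k}}{g_{l,k-1}}=\prod_{\substack{m\mid l-k+1\\ 1\le m\le k}}\Phi_m .$$
   Context: In $\mathbb{Z}[q,q^{-1}]$ set $\{i\}_q=q^i-1$, $\{i\}_{q,n}=\{i\}_q\cdots\{i-n+1\}_q$ (equal to $1$ for $n=0$), $\{n\}_q!=\{n\}_{q,n}$. For $0\le i\le k\le l$ set $h_{l,k,i}=\{l-i\}_{q,k-i}\{i\}_q!$ and $g_{l,k}=\mathrm{GCD}(h_{l,k,0},\dots,h_{l,k,k})$ (greatest common divisor in the UFD $\mathbb{Z}[q,q^{-1}]$, defined up to units $\pm q^j$). $\Phi_m$ is the $m$th cyclotomic polynomial. *)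

theory Defs
  imports Complex_Main "HOL-Computational_Algebra.Computational_Algebra"
begin

definition qbr :: "nat \<Rightarrow> int poly" where
  "qbr i = [:0, 1:] ^ i - 1"

definition qfall :: "nat \<Rightarrow> nat \<Rightarrow> int poly" where
  "qfall i n = (\<Prod>j<n. qbr (i - j))"

definition qfact :: "nat \<Rightarrow> int poly" where
  "qfact n = qfall n n"

definition h :: "nat \<Rightarrow> nat \<Rightarrow> nat \<Rightarrow> int poly" where
  "h l k i = qfall (l - i) (k - i) * qfact i"

definition g :: "nat \<Rightarrow> nat \<Rightarrow> int poly" where
  "g l k = Gcd (h l k ` {0..k})"

definition cyclotomic :: "nat \<Rightarrow> complex poly" where
  "cyclotomic m = (\<Prod>j\<in>{j. j < m \<and> coprime j m}.
       [:- cis (2 * pi * of_nat j / of_nat m), 1:])"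

end

theory Submission
  imports Defs
begin

(*
  All polynomials involved are compared through their root multiplicities over the complex
  numbers.  For z in C let d = ord z be its multiplicative order (0 if z is no root of unity).
  Since q^n - 1 is squarefree with roots exactly the z with d | n, the multiplicity of z in
  h(l,k,i) counts multiples of d, namely (l-i) div d - (l-k) div d + i div d.  The gcd g(l,k)
  divides every h(l,k,i), and conversely a suitable monic integer product of cyclotomic
  polynomials divides all of them; so the multiplicity of z in g(l,k) is the minimum of those
  counts over i <= k.  A carry argument for division by d computes this minimum in closed form
  and shows that it grows by exactly [d | l-k+1 and d <= k] from k-1 to k; as Phi_m has the
  simple roots of order m, both sides of the theorem have the same multiplicities everywhere.
*)


section \<open>The coefficient map from integer to complex polynomials\<close>

abbreviation cpoly :: "int poly \<Rightarrow> complex poly" where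
  "cpoly \<equiv> map_poly of_int"

lemma cpoly_add [simp]: "cpoly (p + q) = cpoly p + cpoly q"
  by (rule poly_eqI) (simp add: coeff_map_poly)

lemma cpoly_diff [simp]: "cpoly (p - q) = cpoly p - cpoly q"
  by (rule poly_eqI) (simp add: coeff_map_poly)

lemma cpoly_mult [simp]: "cpoly (p * q) = cpoly p * cpoly q"
  by (rule poly_eqI) (simp add: coeff_map_poly coeff_mult)

lemma cpoly_power [simp]: "cpoly (p ^ n) = cpoly p ^ n"
  by (induction n) simp_all

lemma cpoly_prod [simp]: "cpoly (\<Prod>i\<in>A. f i) = (\<Prod>i\<in>A. cpoly (f i))"
  by (induction A rule: infinite_finite_induct) simp_all

lemma cpoly_X [simp]: "cpoly [:0, 1:] = [:0, 1:]"
  by (rule poly_eqI) (simp add: coeff_map_poly coeff_pCons split: nat.splits)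

lemma cpoly_dvd: "p dvd q \<Longrightarrow> cpoly p dvd cpoly q"
  by (elim dvdE) simp

lemma cpoly_eq_0_iff [simp]: "cpoly p = 0 \<longleftrightarrow> p = 0"
  by (simp add: map_poly_eq_0_iff)

lemma degree_cpoly [simp]: "degree (cpoly p) = degree p"
  by (simp add: degree_map_poly)

lemma coeff_cpoly [simp]: "coeff (cpoly p) n = of_int (coeff p n)"
  by (simp add: coeff_map_poly)

text \<open>Divisibility by a monic integer polynomial can be tested over the complex numbers,
  because pseudo-division by a monic polynomial is ordinary division with remainder.\<close>

lemma monic_dvd_if_cpoly_dvd:
  assumes monic: "lead_coeff b = 1" and dvd: "cpoly b dvd cpoly a"
  shows "b dvd a"
proof -
  have b0: "b \<noteq> 0" using monic by auto
  obtain q r where qr: "pseudo_divmod a b = (q, r)" by force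
  note pd = pseudo_divmod[OF b0 qr]
  have a: "a = b * q + r" using pd(1) monic by simp
  obtain c where c: "cpoly a = cpoly b * c" using dvd by blast
  have r_eq: "cpoly r = cpoly b * (c - cpoly q)" using a c by (simp add: algebra_simps)
  have "r = 0"
  proof (rule ccontr)
    assume r0: "r \<noteq> 0"
    then have "c - cpoly q \<noteq> 0" using r_eq by auto
    then have "degree r = degree b + degree (c - cpoly q)"
      using r_eq b0 by (metis degree_cpoly degree_mult_eq cpoly_eq_0_iff)
    with pd(2) r0 show False by simp
  qed
  with a show ?thesis by simp
qed

lemma monic_quotient_in_range_cpoly:
  assumes monic: "lead_coeff b = 1" and eq: "cpoly a = cpoly b * c"
  shows "c \<in> range cpoly"
proof -
  have "b dvd a" using monic eq by (intro monic_dvd_if_cpoly_dvd) simp_all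
  then obtain r where r: "a = b * r" ..
  have "cpoly b * cpoly r = cpoly b * c" using eq r by simp
  moreover have "cpoly b \<noteq> 0" using monic by auto
  ultimately have "c = cpoly r" by simp
  then show ?thesis by blast
qed

lemma power_in_range_cpoly: "p \<in> range cpoly \<Longrightarrow> p ^ n \<in> range cpoly"
  by (metis cpoly_power rangeE rangeI)

lemma prod_in_range_cpoly:
  "(\<And>a. a \<in> A \<Longrightarrow> f a \<in> range cpoly) \<Longrightarrow> (\<Prod>a\<in>A. f a) \<in> range cpoly"
proof (induction A rule: infinite_finite_induct)
  case (insert a A)
  obtain p where p: "f a = cpoly p" using insert.prems by blast
  obtain q where q: "(\<Prod>a\<in>A. f a) = cpoly q" using insert.IH insert.prems by blast
  have "(\<Prod>a\<in>insert a A. f a) = cpoly (p * q)" using insert.hyps p q by simp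
  then show ?case by blast
qed (use rangeI[of cpoly 1] in simp_all)


section \<open>Complex polynomials and root multiplicities\<close>

lemma order_prod:
  fixes f :: "'a \<Rightarrow> 'b::idom poly"
  assumes "finite A" "\<And>i. i \<in> A \<Longrightarrow> f i \<noteq> 0"
  shows "order z (\<Prod>i\<in>A. f i) = (\<Sum>i\<in>A. order z (f i))"
  using assms by (induction A rule: finite_induct) (simp_all add: order_mult)

lemma order_power: "p \<noteq> 0 \<Longrightarrow> order z (p ^ n) = n * order z p"
  for p :: "'a::idom poly"
  by (induction n) (simp_all add: order_mult)

lemma order_linear: "order z [:-a, 1:] = (if z = a then 1 else 0)"
  using order_power_n_n[of a 1] by (auto intro: order_0I)

text \<open>By the fundamental theorem of algebra a complex polynomial is determined by its leading
  coefficient and its root multiplicities, and divisibility is comparison of multiplicities.\<close>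

lemma complex_poly_eq_by_order:
  fixes p q :: "complex poly"
  assumes "p \<noteq> 0" "q \<noteq> 0" "lead_coeff p = lead_coeff q" "\<And>z. order z p = order z q"
  shows "p = q"
proof -
  have roots: "{z. poly p z = 0} = {z. poly q z = 0}"
    using assms by (auto simp: order_root)
  have "p = smult (lead_coeff p) (\<Prod>z | poly p z = 0. [:-z, 1:] ^ order z p)"
    by (rule complex_poly_decompose[symmetric])
  also have "\<dots> = smult (lead_coeff q) (\<Prod>z | poly q z = 0. [:-z, 1:] ^ order z q)"
    using roots assms by simp
  also have "\<dots> = q" by (rule complex_poly_decompose)
  finally show ?thesis .
qed

lemma complex_poly_dvd_by_order:
  fixes p q :: "complex poly"
  shows "p \<noteq> 0 \<Longrightarrow> q \<noteq> 0 \<Longrightarrow> (\<And>z. order z p \<le> order z q) \<Longrightarrow> p dvd q"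
proof (induction p arbitrary: q rule: poly_root_order_induct)
  case 0 then show ?case by simp
next
  case (no_roots p)
  then have "degree p = 0"
    using fundamental_theorem_of_algebra constant_degree by blast
  then obtain c where c: "p = [:c:]" by (metis degree_eq_zeroE)
  with no_roots have "c \<noteq> 0" by auto
  then have "q = p * smult (1 / c) q" using c by simp
  then show ?case by (metis dvdI)
next
  case (root p x n)
  have p0: "p \<noteq> 0" using root by auto
  have "order x ([:-x, 1:] ^ n * p) = n"
    using root p0 by (simp add: order_mult order_power_n_n order_0I)
  then have "n \<le> order x q" using root(6)[of x] by simp
  then have "[:-x, 1:] ^ n dvd q" using order_divides by blast
  then obtain q' where q': "q = [:-x, 1:] ^ n * q'" by blast
  have q'0: "q' \<noteq> 0" using q' root by auto
  have "order z p \<le> order z q'" for z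
    using root(6)[of z] q' q'0 p0 by (simp add: order_mult)
  then have "p dvd q'" using root p0 q'0 by blast
  then show ?case using q' by simp
qed

lemma complex_poly_eq_up_to_sign:
  fixes p q :: "complex poly"
  assumes "p \<noteq> 0" "q \<noteq> 0" "lead_coeff p \<in> {1, -1}" "lead_coeff q \<in> {1, -1}"
    and "\<And>z. order z p = order z q"
  shows "\<exists>u::int. (u = 1 \<or> u = -1) \<and> p = smult (of_int u) q"
proof -
  define u :: int where "u = (if lead_coeff p = lead_coeff q then 1 else -1)"
  have u: "u = 1 \<or> u = -1" by (simp add: u_def)
  have "p = smult (of_int u) q"
  proof (rule complex_poly_eq_by_order)
    show "smult (of_int u) q \<noteq> 0" using assms(2) u by auto
    show "lead_coeff p = lead_coeff (smult (of_int u) q)"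
      using assms(3,4) by (auto simp: u_def)
    show "order z p = order z (smult (of_int u) q)" for z
      using assms(5) u by (auto simp: order_smult)
  qed fact
  with u show ?thesis by blast
qed


section \<open>Roots of unity and cyclotomic polynomials\<close>

lemma power_mod_period:
  fixes z :: "'a::monoid_mult"
  assumes "z ^ m = 1"
  shows "z ^ n = z ^ (n mod m)"
proof -
  have "z ^ n = z ^ (m * (n div m) + n mod m)" by simp
  also have "\<dots> = z ^ (n mod m)" by (simp only: power_add power_mult assms power_one mult_1)
  finally show ?thesis .
qed

definition root_order :: "'a::monoid_mult \<Rightarrow> nat" where
  "root_order z = (if \<exists>n>0. z ^ n = 1 then (LEAST n. n > 0 \<and> z ^ n = 1) else 0)"

lemma power_eq_1_iff_root_order_dvd:
  assumes "n > 0"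
  shows "z ^ n = 1 \<longleftrightarrow> root_order z dvd n"
proof (cases "\<exists>n>0. z ^ n = 1")
  case False
  then have "root_order z = 0" unfolding root_order_def by (intro if_not_P)
  moreover have "z ^ n \<noteq> 1" using False assms by blast
  ultimately show ?thesis using assms by simp
next
  case True
  define m where "m = (LEAST n. n > 0 \<and> z ^ n = 1)"
  have m: "m > 0" "z ^ m = 1" using LeastI_ex[OF True] by (auto simp: m_def)
  have least: "\<And>e. e > 0 \<Longrightarrow> z ^ e = 1 \<Longrightarrow> m \<le> e"
    unfolding m_def by (rule Least_le) simp
  have ord: "root_order z = m" using True by (simp add: root_order_def m_def)
  have mod: "z ^ n = z ^ (n mod m)" using m(2) by (rule power_mod_period)
  show ?thesis
  proof
    assume "z ^ n = 1"
    then have "z ^ (n mod m) = 1" using mod by simp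
    then have "n mod m = 0" using least m(1) by (meson mod_less_divisor neq0_conv not_le)
    then show "root_order z dvd n" using ord by auto
  next
    assume "root_order z dvd n"
    then show "z ^ n = 1" using ord m(2) by (auto simp: power_mult)
  qed
qed

lemma root_order_eqI:
  assumes "d > 0" "\<And>n. n > 0 \<Longrightarrow> z ^ n = 1 \<longleftrightarrow> d dvd n"
  shows "root_order z = d"
proof -
  have "root_order z dvd d" using assms power_eq_1_iff_root_order_dvd[of d z] by simp
  then have "root_order z > 0" using assms by (auto intro!: Nat.gr0I)
  then have "d dvd root_order z" using assms power_eq_1_iff_root_order_dvd[of "root_order z" z] by simp
  with \<open>root_order z dvd d\<close> show ?thesis by (simp add: dvd_antisym)
qed

lemma lead_coeff_X_power_minus_1:
  assumes "n > 0"
  shows "lead_coeff ([:0, 1:] ^ n - 1 :: 'a::comm_ring_1 poly) = 1"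
proof -
  have X: "[:0, 1:] ^ n = (monom 1 n :: 'a poly)" by (simp add: monom_altdef)
  have coeff: "coeff ([:0, 1:] ^ n - 1 :: 'a poly) n = 1" using assms by (simp add: X coeff_monom)
  have "degree ([:0, 1:] ^ n - 1 :: 'a poly) \<le> n" unfolding X
    by (rule order.trans[OF degree_diff_le_max]) (simp add: degree_monom_le)
  moreover have "n \<le> degree ([:0, 1:] ^ n - 1 :: 'a poly)" using coeff by (intro le_degree) simp
  ultimately show ?thesis using coeff by simp
qed

lemma X_power_minus_1_nonzero: "n > 0 \<Longrightarrow> ([:0, 1:] ^ n - 1 :: 'a::comm_ring_1 poly) \<noteq> 0"
  using lead_coeff_X_power_minus_1[of n] by (metis leading_coeff_0_iff zero_neq_one)

text \<open>X^n - 1 is squarefree (its derivative n X^(n-1) has only the root 0), with roots the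
  z of order dividing n.\<close>

lemma order_X_power_minus_1:
  assumes "n > 0"
  shows "order z ([:0, 1:] ^ n - 1 :: complex poly) = (if root_order z dvd n then 1 else 0)"
proof -
  let ?p = "[:0, 1:] ^ n - 1 :: complex poly"
  obtain m where n: "n = Suc m" using assms by (cases n) auto
  have "pderiv [:0, 1:] = (1 :: complex poly)" by (simp add: pderiv_pCons)
  then have "pderiv ?p = smult (of_nat n) ([:0, 1:] ^ m)"
    by (simp only: n pderiv_diff pderiv_1 diff_zero pderiv_power_Suc mult_1_right)
  then have "rsquarefree ?p"
    unfolding rsquarefree_roots using assms by (auto simp: power_0_left)
  show ?thesis
  proof (cases "z ^ n = 1")
    case True
    then have "order z ?p = 1"
      using rsquarefree_root_order[OF \<open>rsquarefree ?p\<close>] X_power_minus_1_nonzero[OF assms] by simp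
    then show ?thesis using True power_eq_1_iff_root_order_dvd[OF assms, of z] by simp
  next
    case False
    then show ?thesis using power_eq_1_iff_root_order_dvd[OF assms, of z] by (simp add: order_0I)
  qed
qed

definition unit_root :: "nat \<Rightarrow> complex" where
  "unit_root d = cis (2 * pi / real d)"

lemma unit_root_power: "unit_root d ^ j = cis (2 * pi * of_nat j / of_nat d)"
  by (simp add: unit_root_def DeMoivre field_simps)

lemma unit_root_power_inj: "d > 0 \<Longrightarrow> inj_on (\<lambda>j. unit_root d ^ j) {..<d}"
  using bij_betw_roots_unity[of d] unfolding bij_betw_def by (simp add: unit_root_power)

lemma root_of_unity_is_unit_root_power: "d > 0 \<Longrightarrow> z ^ d = 1 \<Longrightarrow> \<exists>j<d. z = unit_root d ^ j"
  using bij_betw_roots_unity[of d] unfolding bij_betw_def by (auto simp: unit_root_power)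

lemma unit_root_power_eq_1_iff:
  assumes "d > 0"
  shows "unit_root d ^ a = 1 \<longleftrightarrow> d dvd a"
proof -
  have "unit_root d ^ d = 1" by (simp add: unit_root_power complex_eq_iff)
  then have "unit_root d ^ a = unit_root d ^ (a mod d)" by (rule power_mod_period)
  then have "unit_root d ^ a = 1 \<longleftrightarrow> unit_root d ^ (a mod d) = unit_root d ^ 0" by simp
  also have "\<dots> \<longleftrightarrow> a mod d = 0"
    using unit_root_power_inj[OF assms] assms unfolding inj_on_def
    by (metis lessThan_iff mod_less_divisor)
  finally show ?thesis by auto
qed

lemma root_order_unit_root_power:
  assumes d: "d > 0"
  shows "root_order (unit_root d ^ j) = d \<longleftrightarrow> coprime j d"
proof
  assume ord: "root_order (unit_root d ^ j) = d"
  define c where "c = gcd j d"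
  obtain a where a: "d = c * a" unfolding c_def by (metis dvdE gcd_dvd2)
  obtain b where b: "j = c * b" unfolding c_def by (metis dvdE gcd_dvd1)
  have a0: "a > 0" using d a by (cases "a = 0") simp_all
  have "j * a = b * d" unfolding a b by (simp add: ac_simps)
  then have "(unit_root d ^ j) ^ a = 1"
    by (simp add: power_mult[symmetric] unit_root_power_eq_1_iff[OF d])
  then have "d dvd a" using power_eq_1_iff_root_order_dvd[OF a0, of "unit_root d ^ j"] ord by simp
  then have "c * a \<le> a" using a a0 by (simp add: dvd_imp_le)
  then have "c \<le> 1" using a0 by simp
  moreover have "c > 0" using d by (simp add: c_def)
  ultimately have "gcd j d = 1" unfolding c_def by linarith
  then show "coprime j d" by (simp add: coprime_iff_gcd_eq_1)
next
  assume "coprime j d"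
  then show "root_order (unit_root d ^ j) = d"
    using d by (intro root_order_eqI)
      (auto simp: power_mult[symmetric] unit_root_power_eq_1_iff coprime_dvd_mult_right_iff
        coprime_commute)
qed

lemma cyclotomic_unit_root:
  "cyclotomic d = (\<Prod>j\<in>{j. j < d \<and> coprime j d}. [:- (unit_root d ^ j), 1:])"
  by (simp add: cyclotomic_def unit_root_power)

lemma lead_coeff_cyclotomic [simp]: "lead_coeff (cyclotomic d) = 1"
  by (simp add: cyclotomic_unit_root lead_coeff_prod)

lemma cyclotomic_nonzero [simp]: "cyclotomic d \<noteq> 0"
  using lead_coeff_cyclotomic by (metis leading_coeff_0_iff zero_neq_one)

lemma order_cyclotomic:
  assumes d: "d > 0"
  shows "order z (cyclotomic d) = (if root_order z = d then 1 else 0)"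
proof -
  define S where "S = {j. j < d \<and> coprime j d}"
  define w where "w j = unit_root d ^ j" for j
  have inj: "inj_on w S" using unit_root_power_inj[OF d] by (auto simp: w_def S_def inj_on_def)
  have primitive: "z \<in> w ` S \<longleftrightarrow> root_order z = d"
  proof
    assume "root_order z = d"
    moreover from this have "z ^ d = 1" using power_eq_1_iff_root_order_dvd[OF d, of z] by simp
    ultimately show "z \<in> w ` S"
      using root_of_unity_is_unit_root_power[OF d] root_order_unit_root_power[OF d]
      by (fastforce simp: w_def S_def)
  qed (use root_order_unit_root_power[OF d] in \<open>auto simp: w_def S_def\<close>)
  have "order z (cyclotomic d) = (\<Sum>j\<in>S. order z [:- w j, 1:])"
    unfolding cyclotomic_unit_root S_def[symmetric] w_def by (rule order_prod) (simp_all add: S_def)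
  also have "\<dots> = (\<Sum>j\<in>S. if z = w j then 1 else 0)"
    by (simp add: order_linear)
  also have "\<dots> = (\<Sum>y\<in>w ` S. if z = y then 1 else 0)"
    by (simp add: sum.reindex[OF inj])
  also have "\<dots> = (if root_order z = d then 1 else 0)"
    using primitive by (simp add: S_def)
  finally show ?thesis .
qed

lemma order_prod_cyclotomic:
  assumes "finite S" "0 \<notin> S"
  shows "order z (\<Prod>m\<in>S. cyclotomic m ^ e m) = (if root_order z \<in> S then e (root_order z) else 0)"
proof -
  have "order z (\<Prod>m\<in>S. cyclotomic m ^ e m) = (\<Sum>m\<in>S. order z (cyclotomic m ^ e m))"
    using assms by (intro order_prod) auto
  also have "\<dots> = (\<Sum>m\<in>S. if root_order z = m then e m else 0)"
  proof (rule sum.cong)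
    fix m assume "m \<in> S"
    then have "m > 0" using assms(2) by (auto intro: Nat.gr0I)
    then show "order z (cyclotomic m ^ e m) = (if root_order z = m then e m else 0)"
      by (simp add: order_power order_cyclotomic)
  qed simp
  finally show ?thesis using assms(1) by simp
qed

lemma X_power_minus_1_eq_prod_cyclotomic:
  assumes n: "n > 0"
  shows "([:0, 1:] ^ n - 1 :: complex poly) = (\<Prod>d\<in>{d. d dvd n}. cyclotomic d)"
proof (rule complex_poly_eq_by_order)
  have fin: "finite {d. d dvd n}" using n by simp
  have no0: "0 \<notin> {d. d dvd n}" using n by simp
  show "([:0, 1:] ^ n - 1 :: complex poly) \<noteq> 0" using n by (rule X_power_minus_1_nonzero)
  show "(\<Prod>d\<in>{d. d dvd n}. cyclotomic d) \<noteq> 0" using fin by simp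
  show "lead_coeff ([:0, 1:] ^ n - 1 :: complex poly) = lead_coeff (\<Prod>d\<in>{d. d dvd n}. cyclotomic d)"
    unfolding lead_coeff_X_power_minus_1[OF n] by (simp add: lead_coeff_prod)
  show "order z ([:0, 1:] ^ n - 1 :: complex poly) = order z (\<Prod>d\<in>{d. d dvd n}. cyclotomic d)" for z
    using order_prod_cyclotomic[OF fin no0, where e = "\<lambda>_. 1"] order_X_power_minus_1[OF n] by simp
qed

text \<open>Cyclotomic polynomials have integer coefficients: by induction on d, Phi_d is the
  quotient of X^d - 1 by the monic product of the Phi_e with e a proper divisor of d.\<close>

lemma cyclotomic_in_range_cpoly: "d > 0 \<Longrightarrow> cyclotomic d \<in> range cpoly"
proof (induction d rule: less_induct)
  case (less d)
  define T where "T = {e. e dvd d \<and> e < d}"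
  have divisors: "{e. e dvd d} = insert d T" "d \<notin> T" "finite T"
    using less.prems by (auto simp: T_def dvd_imp_le le_neq_implies_less)
  have "(\<Prod>e\<in>T. cyclotomic e) \<in> range cpoly"
    using less.IH less.prems by (intro prod_in_range_cpoly) (auto simp: T_def intro: Nat.gr0I)
  then obtain Q where Q: "cpoly Q = (\<Prod>e\<in>T. cyclotomic e)" by auto
  have "of_int (lead_coeff Q) = (1 :: complex)"
    using arg_cong[OF Q, of lead_coeff] by (simp add: lead_coeff_prod)
  then have monic: "lead_coeff Q = 1" by simp
  have "cpoly ([:0, 1:] ^ d - 1) = cpoly Q * cyclotomic d"
    using X_power_minus_1_eq_prod_cyclotomic[OF less.prems] divisors Q by (simp add: mult.commute)
  then show ?case by (rule monic_quotient_in_range_cpoly[OF monic])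
qed


section \<open>Root multiplicities of the polynomials h(l,k,i)\<close>

lemma cpoly_qbr: "cpoly (qbr n) = [:0, 1:] ^ n - 1"
  by (simp add: qbr_def)

lemma qbr_monic:
  assumes "n > 0"
  shows "lead_coeff (qbr n) = 1"
proof -
  have "lead_coeff (cpoly (qbr n)) = 1"
    unfolding cpoly_qbr using assms by (rule lead_coeff_X_power_minus_1)
  then show ?thesis by simp
qed

lemma qbr_nonzero: "n > 0 \<Longrightarrow> qbr n \<noteq> 0"
  using qbr_monic[of n] by auto

lemma qfall_monic: "c \<le> n \<Longrightarrow> lead_coeff (qfall n c) = 1"
  unfolding qfall_def lead_coeff_prod by (rule prod.neutral) (auto intro: qbr_monic)

lemma qfall_nonzero: "c \<le> n \<Longrightarrow> qfall n c \<noteq> 0"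
  using qfall_monic[of c n] by auto

lemma h_monic: "i \<le> k \<Longrightarrow> k \<le> l \<Longrightarrow> lead_coeff (h l k i) = 1"
  by (simp add: h_def qfact_def lead_coeff_mult qfall_monic)

lemma h_nonzero: "i \<le> k \<Longrightarrow> k \<le> l \<Longrightarrow> h l k i \<noteq> 0"
  using h_monic[of i k l] by auto

lemma Suc_div_eq: "Suc n div m = n div m + (if m dvd Suc n then 1 else 0)"
  for n m :: nat
  by (cases "m = 0") (simp_all add: div_Suc mod_greater_zero_iff_not_dvd)

lemma count_multiples:
  fixes m n c :: nat
  assumes "c \<le> n"
  shows "(\<Sum>j<c. if m dvd (n - j) then 1 else 0) = n div m - (n - c) div m"
  using assms
proof (induction c)
  case (Suc c)
  have "n - c = Suc (n - Suc c)" using Suc.prems by simp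
  then have "(n - c) div m = (n - Suc c) div m + (if m dvd (n - c) then 1 else 0)"
    by (simp add: Suc_div_eq)
  moreover have "(n - c) div m \<le> n div m" by (simp add: div_le_mono)
  ultimately show ?case using Suc by simp
qed simp

lemma order_qfall:
  assumes "c \<le> n"
  shows "order z (cpoly (qfall n c)) = n div root_order z - (n - c) div root_order z"
proof -
  have "order z (cpoly (qfall n c)) = (\<Sum>j<c. order z (cpoly (qbr (n - j))))"
    unfolding qfall_def cpoly_prod using assms by (intro order_prod) (auto simp: qbr_nonzero)
  also have "\<dots> = (\<Sum>j<c. if root_order z dvd (n - j) then 1 else 0)"
    using assms by (intro sum.cong) (auto simp: cpoly_qbr order_X_power_minus_1)
  also have "\<dots> = n div root_order z - (n - c) div root_order z"
    using count_multiples[OF assms] .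
  finally show ?thesis .
qed

text \<open>The multiplicity of a root of order m in h(l,k,i).\<close>

definition h_order :: "nat \<Rightarrow> nat \<Rightarrow> nat \<Rightarrow> nat \<Rightarrow> nat" where
  "h_order m l k i = (l - i) div m - (l - k) div m + i div m"

lemma order_h:
  assumes "i \<le> k" "k \<le> l"
  shows "order z (cpoly (h l k i)) = h_order (root_order z) l k i"
proof -
  have "order z (cpoly (h l k i)) = order z (cpoly (qfall (l - i) (k - i))) + order z (cpoly (qfact i))"
    unfolding h_def cpoly_mult using assms
    by (intro order_mult) (simp add: qfall_nonzero qfact_def)
  then show ?thesis using assms by (simp add: order_qfall qfact_def h_order_def)
qed


section \<open>The minimal multiplicity\<close>

text \<open>The multiplicity of a root of order m in the gcd g(l,k).\<close>

definition g_order :: "nat \<Rightarrow> nat \<Rightarrow> nat \<Rightarrow> nat" where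
  "g_order m l k = Min (h_order m l k ` {0..k})"

lemma g_order_le: "i \<le> k \<Longrightarrow> g_order m l k \<le> h_order m l k i"
  unfolding g_order_def by (rule Min_le) auto

lemma g_order_attained: "\<exists>i\<le>k. g_order m l k = h_order m l k i"
proof -
  have "g_order m l k \<in> h_order m l k ` {0..k}" unfolding g_order_def by (rule Min_in) auto
  then show ?thesis by auto
qed

lemma g_order_0: "g_order 0 l k = 0"
  using g_order_le[of 0 k 0 l] by (simp add: h_order_def)

lemma g_order_large: "k \<le> l \<Longrightarrow> l < m \<Longrightarrow> g_order m l k = 0"
  using g_order_le[of 0 k m l] by (simp add: h_order_def)

text \<open>Splitting l = (l - i) + i, the quotients by m add up to that of l, except for a carry
  which occurs iff the remainder of i exceeds that of l.\<close>

lemma div_diff_add_div: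
  fixes i l m :: nat
  assumes il: "i \<le> l" and m: "m > 0"
  shows "(l - i) div m + i div m + (if l mod m < i mod m then 1 else 0) = l div m"
proof -
  have l: "l = (l - i) + i" using il by simp
  define r s where "r = (l - i) mod m" and "s = i mod m"
  have lt: "r < m" "s < m" using m by (simp_all add: r_def s_def)
  have l_mod: "l mod m = (r + s) mod m" unfolding r_def s_def by (metis l mod_add_eq)
  have carry: "(r + s) div m = (if l mod m < s then 1 else 0)"
  proof (cases "r + s < m")
    case True
    then show ?thesis using l_mod by simp
  next
    case False
    then have "(r + s) div m = 1" using lt by (simp add: le_div_geq)
    moreover have "l mod m < s" using l_mod lt False by (simp add: le_mod_geq)
    ultimately show ?thesis by simp
  qed
  show ?thesis using div_add1_eq[of "l - i" i m] carry l by (simp add: r_def s_def)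
qed

text \<open>A carry is possible for some i <= k iff some i <= k has remainder larger than that
  of l.\<close>

definition can_carry :: "nat \<Rightarrow> nat \<Rightarrow> nat \<Rightarrow> bool" where
  "can_carry m l k \<longleftrightarrow> l mod m + 1 < m \<and> l mod m + 1 \<le> k"

lemma h_order_eq:
  assumes "i \<le> k" "k \<le> l" "m > 0"
  shows "h_order m l k i + (l - k) div m + (if l mod m < i mod m then 1 else 0) = l div m"
proof -
  have "(l - k) div m \<le> (l - i) div m" using assms by (simp add: div_le_mono)
  then show ?thesis using div_diff_add_div[of i l m] assms by (simp add: h_order_def)
qed

text \<open>Closed form of the minimum: it is attained at i = l mod m + 1 if a carry is possible
  and at i = 0 otherwise.\<close>

lemma g_order_eq:
  assumes kl: "k \<le> l" and m: "m > 0"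
  shows "g_order m l k + (l - k) div m + (if can_carry m l k then 1 else 0) = l div m"
proof -
  define i0 where "i0 = (if can_carry m l k then l mod m + 1 else 0)"
  have i0k: "i0 \<le> k" by (simp add: i0_def can_carry_def)
  have carry_i0: "(if l mod m < i0 mod m then 1 else 0) = (if can_carry m l k then 1 else 0 :: nat)"
    by (auto simp: i0_def can_carry_def)
  have carry_le: "(if l mod m < i mod m then 1 else 0) \<le> (if can_carry m l k then 1 else 0 :: nat)"
    if "i \<le> k" for i
  proof (cases "l mod m < i mod m")
    case True
    have "i mod m \<le> i" "i mod m < m" using m by (simp_all add: mod_less_eq_dividend)
    then have "can_carry m l k" using True that unfolding can_carry_def by linarith
    then show ?thesis by simp
  qed simp
  have "g_order m l k = h_order m l k i0"
    unfolding g_order_def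
  proof (rule Min_eqI)
    fix y assume "y \<in> h_order m l k ` {0..k}"
    then obtain i where i: "i \<le> k" "y = h_order m l k i" by auto
    show "h_order m l k i0 \<le> y"
      using h_order_eq[OF i(1) kl m] h_order_eq[OF i0k kl m] carry_i0 carry_le[OF i(1)] i(2)
      by linarith
  qed (use i0k in simp_all)
  then show ?thesis using h_order_eq[OF i0k kl m] carry_i0 by simp
qed

text \<open>From k-1 to k the term (l - k) div m drops by one iff m divides l-k+1; this raises the
  minimum unless a carry becomes possible at the same time, which happens iff moreover m > k.\<close>

lemma can_carry_step:
  fixes m l k :: nat
  assumes m: "m > 0" and k1: "1 \<le> k" and kl: "k \<le> l"
  shows "(if m dvd (l - k + 1) then 1 else 0) + (if can_carry m l (k - 1) then 1 else 0)
       = (if m dvd (l - k + 1) \<and> m \<le> k then 1 else 0) + (if can_carry m l k then 1 else (0::nat))"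
proof (cases "l mod m + 1 = k \<and> k < m")
  case True
  have "l - k + 1 = l - l mod m" using True kl by linarith
  then have "m dvd (l - k + 1)" by (simp add: minus_mod_eq_mult_div)
  then show ?thesis using True by (auto simp: can_carry_def)
next
  case False
  have "\<not> (m dvd (l - k + 1) \<and> k < m)"
  proof
    assume dvd_km: "m dvd (l - k + 1) \<and> k < m"
    have "l - k + 1 = l - (k - 1)" using k1 kl by simp
    then have "l mod m = (k - 1) mod m"
      using dvd_km kl mod_eq_dvd_iff_nat[of "k - 1" l m] by simp
    also have "\<dots> = k - 1" using dvd_km by (intro mod_less) linarith
    finally show False using False dvd_km k1 by simp
  qed
  then show ?thesis using False k1 by (auto simp: can_carry_def not_less)
qed

lemma g_order_step:
  assumes k1: "1 \<le> k" and kl: "k \<le> l"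
  shows "g_order m l k = g_order m l (k - 1) + (if m dvd (l - k + 1) \<and> 1 \<le> m \<and> m \<le> k then 1 else 0)"
proof (cases "m = 0")
  case True then show ?thesis by (simp add: g_order_0)
next
  case False
  then have m: "m > 0" by simp
  have "l - (k - 1) = l - k + 1" "k - 1 \<le> l" using k1 kl by simp_all
  note previous = g_order_eq[OF this(2) m, unfolded this(1)]
  have new_multiple: "(l - k + 1) div m = (l - k) div m + (if m dvd (l - k + 1) then 1 else 0)"
    using Suc_div_eq[of "l - k" m] by simp
  have "(if m dvd (l - k + 1) \<and> 1 \<le> m \<and> m \<le> k then 1 else 0)
      = (if m dvd (l - k + 1) \<and> m \<le> k then 1 else (0::nat))"
    using m by simp
  then show ?thesis
    using g_order_eq[OF kl m] previous new_multiple can_carry_step[OF m k1 kl] by linarith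
qed


section \<open>The multiplicities of g(l,k) and the main theorem\<close>

lemma g_dvd_h: "i \<le> k \<Longrightarrow> g l k dvd h l k i"
  unfolding g_def by (intro Gcd_dvd) simp

lemma g_nonzero: "k \<le> l \<Longrightarrow> g l k \<noteq> 0"
  using g_dvd_h[of 0 k l] h_nonzero[of 0 k l] by auto

text \<open>g(l,k) divides the monic h(l,k,0), so its leading coefficient is a unit of Z.\<close>

lemma lead_coeff_g: "k \<le> l \<Longrightarrow> lead_coeff (g l k) \<in> {1, -1}"
proof -
  assume kl: "k \<le> l"
  obtain r where "h l k 0 = g l k * r" using g_dvd_h[of 0 k l] by blast
  then have "lead_coeff (g l k) * lead_coeff r = 1"
    using h_monic[of 0 k l] kl by (simp add: lead_coeff_mult)
  then show ?thesis using zmult_eq_1_iff by auto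
qed

text \<open>Lower bound: the monic integer polynomial whose complex roots are those of order
  m <= l with multiplicity g_order m l k divides every h(l,k,i), hence g(l,k).\<close>

lemma g_order_le_order_g:
  assumes kl: "k \<le> l"
  shows "g_order (root_order z) l k \<le> order z (cpoly (g l k))"
proof -
  define P where "P = (\<Prod>m\<in>{1..l}. cyclotomic m ^ g_order m l k)"
  have "P \<in> range cpoly"
    unfolding P_def
    by (intro prod_in_range_cpoly power_in_range_cpoly cyclotomic_in_range_cpoly) simp
  then obtain P0 where P0: "cpoly P0 = P" by auto
  have "of_int (lead_coeff P0) = (1 :: complex)"
    using arg_cong[OF P0, of lead_coeff] by (simp add: P_def lead_coeff_prod lead_coeff_power)
  then have monic: "lead_coeff P0 = 1" by simp
  have order_P: "order w P = g_order (root_order w) l k" for w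
    using order_prod_cyclotomic[of "{1..l}" w "\<lambda>m. g_order m l k"] g_order_0 g_order_large[OF kl]
    by (cases "root_order w = 0") (auto simp: P_def not_le)
  have "P0 dvd h l k i" if i: "i \<le> k" for i
  proof (rule monic_dvd_if_cpoly_dvd[OF monic])
    show "cpoly P0 dvd cpoly (h l k i)"
      unfolding P0
    proof (rule complex_poly_dvd_by_order)
      show "P \<noteq> 0" by (simp add: P_def)
      show "cpoly (h l k i) \<noteq> 0" using h_nonzero[OF i kl] by simp
      show "order w P \<le> order w (cpoly (h l k i))" for w
        unfolding order_P order_h[OF i kl] by (rule g_order_le[OF i])
    qed
  qed
  then have "P0 dvd g l k" unfolding g_def by (intro Gcd_greatest) auto
  then have "P dvd cpoly (g l k)" unfolding P0[symmetric] by (rule cpoly_dvd)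
  then show ?thesis
    using dvd_imp_order_le[of "cpoly (g l k)" P z] g_nonzero[OF kl] order_P by simp
qed

text \<open>Upper bound: g(l,k) divides the h(l,k,i) at which the minimum is attained.\<close>

lemma order_g:
  assumes kl: "k \<le> l"
  shows "order z (cpoly (g l k)) = g_order (root_order z) l k"
proof -
  obtain i where i: "i \<le> k" "g_order (root_order z) l k = h_order (root_order z) l k i"
    using g_order_attained by blast
  have "cpoly (g l k) dvd cpoly (h l k i)" using g_dvd_h[OF i(1)] by (rule cpoly_dvd)
  then have "order z (cpoly (g l k)) \<le> order z (cpoly (h l k i))"
    using h_nonzero[OF i(1) kl] by (intro dvd_imp_order_le) simp_all
  then show ?thesis using i order_h[OF i(1) kl] g_order_le_order_g[OF kl, of z] by simp
qed

text \<open>Both sides are nonzero with leading coefficient a sign, and their multiplicities at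
  a root of order m agree by the increment formula for g_order.\<close>

theorem mainTheorem5:
  fixes l k :: nat
  assumes "1 \<le> k" and "k \<le> l"
  shows "\<exists>u::int. (u = 1 \<or> u = -1) \<and>
           map_poly of_int (g l k) =
           smult (of_int u) (map_poly of_int (g l (k - 1)) *
              (\<Prod>m\<in>{m. m dvd (l - k + 1) \<and> 1 \<le> m \<and> m \<le> k}. cyclotomic m))"
proof -
  define S where "S = {m. m dvd (l - k + 1) \<and> 1 \<le> m \<and> m \<le> k}"
  have S: "finite S" "0 \<notin> S" unfolding S_def by (auto intro: finite_subset[of _ "{1..k}"])
  have kl': "k - 1 \<le> l" using assms by simp
  have "\<exists>u::int. (u = 1 \<or> u = -1) \<and>
      cpoly (g l k) = smult (of_int u) (cpoly (g l (k - 1)) * (\<Prod>m\<in>S. cyclotomic m))"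
  proof (rule complex_poly_eq_up_to_sign)
    show "cpoly (g l k) \<noteq> 0" "lead_coeff (cpoly (g l k)) \<in> {1, -1}"
      using g_nonzero[OF assms(2)] lead_coeff_g[OF assms(2)] by auto
    show "cpoly (g l (k - 1)) * (\<Prod>m\<in>S. cyclotomic m) \<noteq> 0"
      "lead_coeff (cpoly (g l (k - 1)) * (\<Prod>m\<in>S. cyclotomic m)) \<in> {1, -1}"
      using g_nonzero[OF kl'] lead_coeff_g[OF kl'] S
      by (auto simp: lead_coeff_mult lead_coeff_prod)
    show "order z (cpoly (g l k)) = order z (cpoly (g l (k - 1)) * (\<Prod>m\<in>S. cyclotomic m))" for z
      using order_g[OF assms(2)] order_g[OF kl'] g_order_step[OF assms]
        order_prod_cyclotomic[OF S, where e = "\<lambda>_. 1"] g_nonzero[OF kl'] S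
      by (simp add: order_mult S_def)
  qed
  then show ?thesis unfolding S_def .
qed

end
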